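(* Let $Y$ be a finite set (and $X$ a finite set), $\rho\in(0,1/2)$, $\delta_2\in(0,1/2)$, $\gamma>0$. Every deterministic protocol for $\textsc{Agree}_{\delta_2,\gamma}(\mathcal D_\rho)$ yields (by interpreting Alice's and Bob's input strings $r,s\in\{0,1\}^{|Y|}$ as the truth tables of $f',g':Y\to\{0,1\}$) a deterministic protocol, with the same communication, for $\textsc{Agreement-Distillation}^k_{\gamma,\rho}$ on strings of length $|Y|$, where $k=(1-h(\delta_2))|Y|$ and $h(x)=-x\log x-(1-x)\log(1-x)$ is the binary entropy function.
   Context: For Boolean functions on $X\times Y$, $\delta(f,g)$ is the fraction of $(x,y)\in X\times Y$ with $f(x,y)\ne g(x,y)$. $\mathcal F_B$ is the set of functions $f:X\times Y\to\{0,1\}$ of the form $f(x,y)=f'(y)$ for some $f':Y\to\{0,1\}$. $\mathcal D_\rho$ is the distribution on pairs $(f,g)$ obtained by drawing $f$ uniformly from $\mathcal F_B$ and setting $g(x,y)=g'(y)$ where independently for each $y\in Y$, $g'(y)=f'(y)$ with probability $1-\rho$ and $g'(y)=1-f'(y)$ with probability $\rho$. $\textsc{Agree}_{\delta_2,\gamma}(\mathcal D_\rho)$: Alice gets $f$, Bob gets $g$ with $(f,g)\sim\mathcal D_\rho$; Alice outputs $q_A$, Bob outputs $q_B$ with always $\delta(q_A,f)\le\delta_2$, $\delta(q_B,g)\le\delta_2$, and $\Pr[q_A=q_B]\ge\gamma$ over the input distribution. A pair $(r,s)\in\{0,1\}^m\times\{0,1\}^m$ is $\rho$-perturbed if the pairs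 $(r_i,s_i)$ are independent, each $r_i$ uniform and $s_i=r_i$ with probability $1-\rho$, $s_i\ne r_i$ with probability $\rho$. $\textsc{Agreement-Distillation}^k_{\gamma,\rho}$: Alice gets $r$ and Bob gets $s$ with $(r,s)$ $\rho$-perturbed; they communicate deterministically and output $w_A$, $w_B$ such that $H_\infty(w_A),H_\infty(w_B)\ge k$ and $\Pr[w_A=w_B]\ge\gamma$, where $H_\infty(W)=\min_{w\in\mathrm{supp}(W)}(-\log\Pr[W=w])$. Logs base 2. *)

theory Defs
  imports "HOL-Probability.Probability"
begin

text \<open>At a leaf, Alice's and
Bob's outputs depend only on their own input (and, implicitly, on the transcript,
i.e. the position of the leaf).\<close>

datatype ('a, 'b, 'o) protocol =
    Leaf "'a \<Rightarrow> 'o" "'b \<Rightarrow> 'o"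
  | SendA "'a \<Rightarrow> bool" "('a, 'b, 'o) protocol" "('a, 'b, 'o) protocol"
  | SendB "'b \<Rightarrow> bool" "('a, 'b, 'o) protocol" "('a, 'b, 'o) protocol"

fun run :: "('a, 'b, 'o) protocol \<Rightarrow> 'a \<Rightarrow> 'b \<Rightarrow> 'o \<times> 'o" where
  "run (Leaf oa ob) a b = (oa a, ob b)"
| "run (SendA m p0 p1) a b = run (if m a then p1 else p0) a b"
| "run (SendB m p0 p1) a b = run (if m b then p1 else p0) a b"

fun comm :: "('a, 'b, 'o) protocol \<Rightarrow> nat" where
  "comm (Leaf oa ob) = 0"
| "comm (SendA m p0 p1) = Suc (max (comm p0) (comm p1))"
| "comm (SendB m p0 p1) = Suc (max (comm p0) (comm p1))"

definition frac_dist :: "('c::finite \<Rightarrow> bool) \<Rightarrow> ('c \<Rightarrow> bool) \<Rightarrow> real" where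
  "frac_dist f g = real (card {z. f z \<noteq> g z}) / real (card (UNIV :: 'c set))"

definition corr_bit :: "real \<Rightarrow> (bool \<times> bool) pmf" where
  "corr_bit \<rho> = do { b \<leftarrow> bernoulli_pmf (1/2); flip \<leftarrow> bernoulli_pmf \<rho>;
                      return_pmf (b, b \<noteq> flip) }"

definition D_rho :: "real \<Rightarrow> (('x::finite \<times> 'y::finite \<Rightarrow> bool) \<times> ('x \<times> 'y \<Rightarrow> bool)) pmf" where
  "D_rho \<rho> = map_pmf (\<lambda>h. (\<lambda>(x, y). fst (h y), \<lambda>(x, y). snd (h y)))
                (Pi_pmf (UNIV :: 'y set) undefined (\<lambda>_. corr_bit \<rho>))"

definition perturbed :: "real \<Rightarrow> nat \<Rightarrow> (bool list \<times> bool list) pmf" where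
  "perturbed \<rho> m = map_pmf (\<lambda>h. (map (\<lambda>i. fst (h i)) [0..<m], map (\<lambda>i. snd (h i)) [0..<m]))
                (Pi_pmf {..<m} undefined (\<lambda>_. corr_bit \<rho>))"

definition min_entropy :: "'a pmf \<Rightarrow> real" where
  "min_entropy p = (INF w \<in> set_pmf p. - log 2 (pmf p w))"

definition bin_entropy :: "real \<Rightarrow> real" where
  "bin_entropy x = - x * log 2 x - (1 - x) * log 2 (1 - x)"

definition solves_Agree ::
  "real \<Rightarrow> real \<Rightarrow> real \<Rightarrow>
   ('x::finite \<times> 'y::finite \<Rightarrow> bool, 'x \<times> 'y \<Rightarrow> bool, 'x \<times> 'y \<Rightarrow> bool) protocol \<Rightarrow> bool" where
  "solves_Agree \<delta>2 \<gamma> \<rho> P \<longleftrightarrow>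
     (\<forall>(f, g) \<in> set_pmf (D_rho \<rho>).
        frac_dist (fst (run P f g)) f \<le> \<delta>2 \<and> frac_dist (snd (run P f g)) g \<le> \<delta>2) \<and>
     measure_pmf.prob (D_rho \<rho>) {(f, g). fst (run P f g) = snd (run P f g)} \<ge> \<gamma>"

definition solves_AD ::
  "nat \<Rightarrow> real \<Rightarrow> real \<Rightarrow> real \<Rightarrow> (bool list, bool list, 'o) protocol \<Rightarrow> bool" where
  "solves_AD m k \<gamma> \<rho> P \<longleftrightarrow>
     min_entropy (map_pmf (\<lambda>(r, s). fst (run P r s)) (perturbed \<rho> m)) \<ge> k \<and>
     min_entropy (map_pmf (\<lambda>(r, s). snd (run P r s)) (perturbed \<rho> m)) \<ge> k \<and>
     measure_pmf.prob (perturbed \<rho> m) {(r, s). fst (run P r s) = snd (run P r s)} \<ge> \<gamma>"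

end

theory Submission
  imports Defs
begin

text \<open>Reading a string r of length |Y| as the truth table (x, y) \<mapsto> r ! idx y of a function
in F_B, for an enumeration idx of Y, turns a \<rho>-perturbed pair of strings into a sample of
D_\<rho>. Running the Agree protocol on the two truth tables therefore keeps the communication
and the agreement probability.
For the min-entropy, Alice's output w is \<delta>2-close to her input, which is uniform on
F_B \<cong> {0,1}^Y; so Pr[w] is at most 2^-|Y| times the number of h : Y \<rightarrow> {0,1} with
\<delta>(w, h \<circ> snd) \<le> \<delta>2. Averaging over X turns this set into a ball of a weighted Hamming
distance on {0,1}^Y, and such a ball has at most 2^(h(\<delta>2) |Y|) points by the
exponential-moment bound with base \<delta>2 / (1 - \<delta>2). Bob's side is symmetric.\<close>

fun map_protocol :: "('a \<Rightarrow> 'c) \<Rightarrow> ('b \<Rightarrow> 'd) \<Rightarrow> ('c, 'd, 'o) protocol \<Rightarrow> ('a, 'b, 'o) protocol" where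
  "map_protocol ca cb (Leaf oa ob) = Leaf (oa \<circ> ca) (ob \<circ> cb)"
| "map_protocol ca cb (SendA m p0 p1) = SendA (m \<circ> ca) (map_protocol ca cb p0) (map_protocol ca cb p1)"
| "map_protocol ca cb (SendB m p0 p1) = SendB (m \<circ> cb) (map_protocol ca cb p0) (map_protocol ca cb p1)"

lemma run_map_protocol: "run (map_protocol ca cb p) a b = run p (ca a) (cb b)"
  by (induction p) auto

lemma comm_map_protocol: "comm (map_protocol ca cb p) = comm p"
  by (induction p) auto

definition outcome :: "('a, 'b, 'o) protocol \<Rightarrow> ('a \<times> 'b) pmf \<Rightarrow> ('o \<times> 'o) pmf" where
  "outcome P p = map_pmf (\<lambda>(a, b). run P a b) p"

lemma outcome_map_protocol:
  "outcome (map_protocol ca cb P) p = outcome P (map_pmf (map_prod ca cb) p)"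
  unfolding outcome_def pmf.map_comp by (rule map_pmf_cong) (auto simp: run_map_protocol)

lemma solves_AD_iff_outcome:
  "solves_AD m k \<gamma> \<rho> P \<longleftrightarrow>
     k \<le> min_entropy (map_pmf fst (outcome P (perturbed \<rho> m))) \<and>
     k \<le> min_entropy (map_pmf snd (outcome P (perturbed \<rho> m))) \<and>
     \<gamma> \<le> measure_pmf.prob (outcome P (perturbed \<rho> m)) {(u, v). u = v}"
  unfolding solves_AD_def outcome_def pmf.map_comp measure_map_pmf
  by (simp add: comp_def case_prod_unfold vimage_def)

lemma Pi_pmf_UNIV_uniform:
  "Pi_pmf (UNIV :: 'a::finite set) d (\<lambda>_. pmf_of_set (UNIV :: 'b::finite set)) = pmf_of_set UNIV"
  by (simp add: Pi_pmf_of_set PiE_dflt_def)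

lemma corr_bit_fst: "map_pmf fst (corr_bit \<rho>) = pmf_of_set UNIV"
  unfolding corr_bit_def
  by (simp add: map_bind_pmf bind_return_pmf' bernoulli_pmf_half_conv_pmf_of_set)

lemma corr_bit_snd: "map_pmf snd (corr_bit \<rho>) = pmf_of_set UNIV"
proof -
  have flip_uniform: "map_pmf (\<lambda>b. b \<noteq> fl) (pmf_of_set UNIV) = pmf_of_set UNIV" for fl :: bool
  proof -
    have "inj (\<lambda>b. b \<noteq> fl)" "range (\<lambda>b. b \<noteq> fl) = UNIV"
      using surjI[where f = "\<lambda>b. b \<noteq> fl" and g = "\<lambda>b. b \<noteq> fl"] by (auto simp: inj_on_def)
    then show ?thesis using map_pmf_of_set_inj[of "\<lambda>b. b \<noteq> fl" UNIV] by simp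
  qed
  have "map_pmf snd (corr_bit \<rho>) =
        bernoulli_pmf (1/2) \<bind> (\<lambda>b. bernoulli_pmf \<rho> \<bind> (\<lambda>fl. return_pmf (b \<noteq> fl)))"
    unfolding corr_bit_def by (simp add: map_bind_pmf)
  also have "\<dots> = bernoulli_pmf \<rho> \<bind> (\<lambda>fl. map_pmf (\<lambda>b. b \<noteq> fl) (bernoulli_pmf (1/2)))"
    by (subst bind_commute_pmf) (simp add: map_pmf_def)
  also have "\<dots> = pmf_of_set UNIV"
    by (simp only: bernoulli_pmf_half_conv_pmf_of_set flip_uniform bind_pmf_const)
  finally show ?thesis .
qed

lemma D_rho_fst:
  "map_pmf fst (D_rho \<rho> :: (('x::finite \<times> 'y::finite \<Rightarrow> bool) \<times> _) pmf)
     = map_pmf (\<lambda>h. h \<circ> snd) (pmf_of_set (UNIV :: ('y \<Rightarrow> bool) set))"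
proof -
  have uniform: "map_pmf (\<lambda>h. fst \<circ> h) (Pi_pmf (UNIV :: 'y set) undefined (\<lambda>_. corr_bit \<rho>))
          = pmf_of_set UNIV"
    by (simp add: Pi_pmf_map[symmetric] corr_bit_fst Pi_pmf_UNIV_uniform)
  show ?thesis
    unfolding D_rho_def by (simp add: pmf.map_comp comp_def case_prod_unfold flip: uniform)
qed

lemma D_rho_snd:
  "map_pmf snd (D_rho \<rho> :: (('x::finite \<times> 'y::finite \<Rightarrow> bool) \<times> _) pmf)
     = map_pmf (\<lambda>h. h \<circ> snd) (pmf_of_set (UNIV :: ('y \<Rightarrow> bool) set))"
proof -
  have uniform: "map_pmf (\<lambda>h. snd \<circ> h) (Pi_pmf (UNIV :: 'y set) undefined (\<lambda>_. corr_bit \<rho>))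
          = pmf_of_set UNIV"
    by (simp add: Pi_pmf_map[symmetric] corr_bit_snd Pi_pmf_UNIV_uniform)
  show ?thesis
    unfolding D_rho_def by (simp add: pmf.map_comp comp_def case_prod_unfold flip: uniform)
qed

lemma D_rho_eq_map_perturbed:
  fixes idx :: "'y::finite \<Rightarrow> nat"
  assumes "bij_betw idx UNIV {..<CARD('y)}"
  shows "D_rho \<rho> = map_pmf (map_prod (\<lambda>r (x :: 'x::finite, y). r ! idx y) (\<lambda>s (x, y). s ! idx y))
                      (perturbed \<rho> CARD('y))"
proof -
  have "Pi_pmf UNIV undefined (\<lambda>_. corr_bit \<rho>) =
        map_pmf (\<lambda>h. h \<circ> idx) (Pi_pmf {..<CARD('y)} undefined (\<lambda>_. corr_bit \<rho>))"
    using assms by (intro Pi_pmf_bij_betw) auto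
  moreover have "idx y < CARD('y)" for y
    using assms by (auto simp: bij_betw_def)
  ultimately show ?thesis
    unfolding D_rho_def perturbed_def by (simp add: pmf.map_comp o_def)
qed

lemma powr_add_powr_one_minus_le:
  fixes t a :: real
  assumes "0 < t" "t \<le> 1" "0 \<le> a" "a \<le> 1"
  shows "t powr a + t powr (1 - a) \<le> 1 + t"
proof -
  have "0 \<le> (1 - t powr a) * (1 - t powr (1 - a))"
    using assms by (intro mult_nonneg_nonneg) (simp_all add: powr_le1)
  moreover have "t powr a * t powr (1 - a) = t"
    using assms by (simp flip: powr_add)
  ultimately show ?thesis by (simp add: algebra_simps)
qed

lemma bin_entropy_powr:
  fixes \<delta> m :: real
  assumes "0 < \<delta>" "\<delta> < 1"
  shows "(\<delta> / (1 - \<delta>)) powr (- \<delta> * m) * (1 + \<delta> / (1 - \<delta>)) powr m = 2 powr (bin_entropy \<delta> * m)"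
proof -
  define t where "t = \<delta> / (1 - \<delta>)"
  have t: "0 < t" "0 < 1 + t"
    using assms unfolding t_def by (simp_all add: add_pos_pos)
  have entropy_ln: "bin_entropy \<delta> * ln 2 = - \<delta> * ln \<delta> - (1 - \<delta>) * ln (1 - \<delta>)"
    unfolding bin_entropy_def log_def by (simp add: field_simps)
  have "1 + t = 1 / (1 - \<delta>)"
    using assms by (simp add: t_def field_simps)
  then have "- \<delta> * m * ln t + m * ln (1 + t) = m * (- \<delta> * ln \<delta> - (1 - \<delta>) * ln (1 - \<delta>))"
    using assms by (simp add: t_def ln_div algebra_simps)
  also have "\<dots> = bin_entropy \<delta> * m * ln 2"
    unfolding entropy_ln [symmetric] by simp
  finally show ?thesis
    using t unfolding t_def [symmetric] by (simp add: powr_def exp_add [symmetric])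
qed

lemma card_weighted_ball_le:
  fixes a :: "'y::finite \<Rightarrow> bool \<Rightarrow> real" and \<delta> :: real
  assumes \<delta>: "0 < \<delta>" "\<delta> < 1/2"
    and nonneg: "\<And>y b. 0 \<le> a y b" and sum_one: "\<And>y. a y True + a y False = 1"
  shows "real (card {h. (\<Sum>y\<in>UNIV. a y (h y)) \<le> \<delta> * CARD('y)})
           \<le> 2 powr (bin_entropy \<delta> * CARD('y))"
proof -
  define m where "m = real CARD('y)"
  define t where "t = \<delta> / (1 - \<delta>)"
  have t: "0 < t" "t < 1"
    unfolding t_def using \<delta> by (auto simp: field_simps)
  define W where "W h = t powr ((\<Sum>y\<in>UNIV. a y (h y)) - \<delta> * m)" for h :: "'y \<Rightarrow> bool"
  let ?S = "{h. (\<Sum>y\<in>UNIV. a y (h y)) \<le> \<delta> * m}"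
  \<comment> \<open>Each point of the ball has weight at least 1, and the total weight factorises over y.\<close>
  have "1 \<le> W h" if "h \<in> ?S" for h
    using that t unfolding W_def by (metis diff_le_0_iff_le not_less powr01_less_one mem_Collect_eq)
  then have "real (card ?S) \<le> (\<Sum>h\<in>?S. W h)"
    using sum_mono[of ?S "\<lambda>_. 1 :: real" W] by simp
  also have "\<dots> \<le> (\<Sum>h\<in>UNIV. W h)"
    by (rule sum_mono2) (auto simp: W_def)
  also have "\<dots> = t powr (- \<delta> * m) * (\<Sum>h\<in>UNIV. \<Prod>y\<in>UNIV. t powr a y (h y))"
    unfolding W_def using t
    by (simp add: powr_diff powr_sum sum_distrib_left divide_inverse powr_minus mult.commute)
  also have "(\<Sum>h\<in>UNIV. \<Prod>y\<in>UNIV. t powr a y (h y)) = (\<Prod>y\<in>UNIV. \<Sum>b\<in>UNIV. t powr a y b)"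
    by (subst prod_sum_PiE) (auto simp: PiE_UNIV_domain)
  also have "\<dots> \<le> (\<Prod>y\<in>(UNIV :: 'y set). 1 + t)"
  proof (rule prod_mono, intro conjI)
    fix y :: 'y
    have "a y False = 1 - a y True" "a y True \<le> 1"
      using sum_one[of y] nonneg[of y False] by simp_all
    then show "(\<Sum>b\<in>UNIV. t powr a y b) \<le> 1 + t"
      using powr_add_powr_one_minus_le[of t "a y True"] t nonneg[of y True] by (simp add: UNIV_bool)
  qed (simp add: sum_nonneg)
  also have "\<dots> = (1 + t) powr m"
    unfolding m_def using t by (simp add: powr_realpow)
  finally have "real (card ?S) \<le> t powr (- \<delta> * m) * (1 + t) powr m"
    using t by (simp add: mult_left_mono)
  also have "\<dots> = 2 powr (bin_entropy \<delta> * m)"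
    unfolding t_def using \<delta> by (intro bin_entropy_powr) auto
  finally show ?thesis unfolding m_def .
qed

definition column_dist :: "('x::finite \<times> 'y \<Rightarrow> bool) \<Rightarrow> 'y \<Rightarrow> bool \<Rightarrow> real" where
  "column_dist w y b = real (card {x. w (x, y) \<noteq> b}) / real CARD('x)"

lemma column_dist_nonneg: "0 \<le> column_dist w y b"
  by (simp add: column_dist_def)

lemma column_dist_True_False: "column_dist w y True + column_dist w y False = 1"
proof -
  have "card {x. \<not> w (x, y)} + card {x. w (x, y)} = card ({x. \<not> w (x, y)} \<union> {x. w (x, y)})"
    by (rule card_Un_disjoint [symmetric]) auto
  also have "{x. \<not> w (x, y)} \<union> {x. w (x, y)} = UNIV"
    by auto
  finally show ?thesis
    unfolding column_dist_def by (simp add: field_simps flip: of_nat_add)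
qed

lemma frac_dist_comp_snd:
  fixes w :: "'x::finite \<times> 'y::finite \<Rightarrow> bool"
  shows "frac_dist w (h \<circ> snd) = (\<Sum>y\<in>UNIV. column_dist w y (h y)) / real CARD('y)"
proof -
  have "{z. w z \<noteq> (h \<circ> snd) z} = (\<Union>y. {x. w (x, y) \<noteq> h y} \<times> {y})"
    by fastforce
  then have "card {z. w z \<noteq> (h \<circ> snd) z} = (\<Sum>y\<in>UNIV. card ({x. w (x, y) \<noteq> h y} \<times> {y}))"
    by (simp only:) (rule card_UN_disjoint, auto)
  also have "\<dots> = (\<Sum>y\<in>UNIV. card {x. w (x, y) \<noteq> h y})"
    by (simp add: card_cartesian_product)
  finally have "real (card {z. w z \<noteq> (h \<circ> snd) z})
                  = real CARD('x) * (\<Sum>y\<in>UNIV. column_dist w y (h y))"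
    unfolding column_dist_def by (simp add: sum_distrib_left)
  moreover have "CARD('x \<times> 'y) = CARD('x) * CARD('y)"
    by (simp add: card_cartesian_product flip: UNIV_Times_UNIV)
  ultimately show ?thesis
    unfolding frac_dist_def by simp
qed

lemma card_frac_dist_ball_le:
  fixes w :: "'x::finite \<times> 'y::finite \<Rightarrow> bool"
  assumes "0 < \<delta>" "\<delta> < 1/2"
  shows "real (card {h :: 'y \<Rightarrow> bool. frac_dist w (h \<circ> snd) \<le> \<delta>})
           \<le> 2 powr (bin_entropy \<delta> * CARD('y))"
proof -
  have "{h :: 'y \<Rightarrow> bool. frac_dist w (h \<circ> snd) \<le> \<delta>}
          = {h. (\<Sum>y\<in>UNIV. column_dist w y (h y)) \<le> \<delta> * CARD('y)}"
    by (simp add: frac_dist_comp_snd divide_le_eq)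
  then show ?thesis
    using card_weighted_ball_le[of \<delta> "column_dist w", OF assms column_dist_nonneg column_dist_True_False]
    by simp
qed

lemma pmf_map_close_to_uniform_comp_snd:
  fixes q \<pi> :: "'c \<Rightarrow> ('x::finite \<times> 'y::finite \<Rightarrow> bool)"
  assumes close: "\<And>c. c \<in> set_pmf D \<Longrightarrow> frac_dist (q c) (\<pi> c) \<le> \<delta>"
    and marginal: "map_pmf \<pi> D = map_pmf (\<lambda>h. h \<circ> snd) (pmf_of_set UNIV)"
  shows "pmf (map_pmf q D) w \<le> real (card {h :: 'y \<Rightarrow> bool. frac_dist w (h \<circ> snd) \<le> \<delta>}) / 2 ^ CARD('y)"
proof -
  let ?B = "{f. frac_dist w f \<le> \<delta>}"
  have "pmf (map_pmf q D) w = measure D (q -` {w} \<inter> set_pmf D)"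
    by (simp add: pmf_map measure_Int_set_pmf)
  also have "\<dots> \<le> measure D (\<pi> -` ?B)"
    using close by (intro measure_pmf.finite_measure_mono) auto
  also have "\<dots> = measure (map_pmf \<pi> D) ?B"
    by (simp add: measure_map_pmf)
  also have "\<dots> = measure (pmf_of_set UNIV) ((\<lambda>h :: 'y \<Rightarrow> bool. h \<circ> snd) -` ?B)"
    unfolding marginal by (simp add: measure_map_pmf)
  also have "\<dots> = real (card {h :: 'y \<Rightarrow> bool. frac_dist w (h \<circ> snd) \<le> \<delta>}) / 2 ^ CARD('y)"
    by (simp add: measure_pmf_of_set card_fun vimage_def)
  finally show ?thesis .
qed

lemma min_entropy_ge:
  assumes "\<And>w. w \<in> set_pmf p \<Longrightarrow> pmf p w \<le> 2 powr (- k)"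
  shows "k \<le> min_entropy p"
  unfolding min_entropy_def
proof (rule cINF_greatest)
  fix w assume "w \<in> set_pmf p"
  then have "log 2 (pmf p w) \<le> log 2 (2 powr (- k))"
    using assms by (subst log_le_cancel_iff) (auto simp: pmf_positive)
  then show "k \<le> - log 2 (pmf p w)"
    by simp
qed (rule set_pmf_not_empty)

lemma min_entropy_map_close_to_uniform_comp_snd:
  fixes q \<pi> :: "'c \<Rightarrow> ('x::finite \<times> 'y::finite \<Rightarrow> bool)"
  assumes "\<And>c. c \<in> set_pmf D \<Longrightarrow> frac_dist (q c) (\<pi> c) \<le> \<delta>"
    and "map_pmf \<pi> D = map_pmf (\<lambda>h. h \<circ> snd) (pmf_of_set UNIV)"
    and "0 < \<delta>" "\<delta> < 1/2"
  shows "(1 - bin_entropy \<delta>) * CARD('y) \<le> min_entropy (map_pmf q D)"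
proof (rule min_entropy_ge)
  fix w
  have "pmf (map_pmf q D) w
          \<le> real (card {h :: 'y \<Rightarrow> bool. frac_dist w (h \<circ> snd) \<le> \<delta>}) / 2 ^ CARD('y)"
    by (rule pmf_map_close_to_uniform_comp_snd[OF assms(1,2)])
  also have "\<dots> \<le> 2 powr (bin_entropy \<delta> * CARD('y)) / 2 ^ CARD('y)"
    by (intro divide_right_mono card_frac_dist_ball_le assms(3,4)) simp
  also have "\<dots> = 2 powr (- ((1 - bin_entropy \<delta>) * CARD('y)))"
    by (simp add: powr_diff powr_realpow algebra_simps flip: powr_minus_divide)
  finally show "pmf (map_pmf q D) w \<le> 2 powr (- ((1 - bin_entropy \<delta>) * CARD('y)))" .
qed

lemma solves_Agree_outcome:
  fixes P :: "('x::finite \<times> 'y::finite \<Rightarrow> bool, 'x \<times> 'y \<Rightarrow> bool, 'x \<times> 'y \<Rightarrow> bool) protocol"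
  assumes solves: "solves_Agree \<delta>2 \<gamma> \<rho> P" and \<delta>2: "0 < \<delta>2" "\<delta>2 < 1/2"
  shows "(1 - bin_entropy \<delta>2) * CARD('y) \<le> min_entropy (map_pmf fst (outcome P (D_rho \<rho>)))"
    and "(1 - bin_entropy \<delta>2) * CARD('y) \<le> min_entropy (map_pmf snd (outcome P (D_rho \<rho>)))"
    and "\<gamma> \<le> measure_pmf.prob (outcome P (D_rho \<rho>)) {(u, v). u = v}"
proof -
  have close_A: "\<And>c. c \<in> set_pmf (D_rho \<rho>) \<Longrightarrow> frac_dist (fst (run P (fst c) (snd c))) (fst c) \<le> \<delta>2"
   and close_B: "\<And>c. c \<in> set_pmf (D_rho \<rho>) \<Longrightarrow> frac_dist (snd (run P (fst c) (snd c))) (snd c) \<le> \<delta>2"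
   and agree: "\<gamma> \<le> measure_pmf.prob (D_rho \<rho>) {(f, g). fst (run P f g) = snd (run P f g)}"
    using solves unfolding solves_Agree_def by auto
  show "(1 - bin_entropy \<delta>2) * CARD('y) \<le> min_entropy (map_pmf fst (outcome P (D_rho \<rho>)))"
    unfolding outcome_def pmf.map_comp
    using min_entropy_map_close_to_uniform_comp_snd[OF close_A D_rho_fst \<delta>2]
    by (simp add: comp_def case_prod_unfold)
  show "(1 - bin_entropy \<delta>2) * CARD('y) \<le> min_entropy (map_pmf snd (outcome P (D_rho \<rho>)))"
    unfolding outcome_def pmf.map_comp
    using min_entropy_map_close_to_uniform_comp_snd[OF close_B D_rho_snd \<delta>2]
    by (simp add: comp_def case_prod_unfold)
  show "\<gamma> \<le> measure_pmf.prob (outcome P (D_rho \<rho>)) {(u, v). u = v}"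
    using agree unfolding outcome_def measure_map_pmf by (simp add: vimage_def case_prod_unfold)
qed

theorem mainTheorem5:
  fixes P :: "('x::finite \<times> 'y::finite \<Rightarrow> bool, 'x \<times> 'y \<Rightarrow> bool, 'x \<times> 'y \<Rightarrow> bool) protocol"
    and \<rho> \<delta>2 \<gamma> :: real
  assumes "0 < \<rho>" "\<rho> < 1/2" "0 < \<delta>2" "\<delta>2 < 1/2" "\<gamma> > 0"
    and "solves_Agree \<delta>2 \<gamma> \<rho> P"
  shows "\<exists>P' :: (bool list, bool list, 'x \<times> 'y \<Rightarrow> bool) protocol.
           comm P' = comm P \<and>
           solves_AD (card (UNIV :: 'y set))
             ((1 - bin_entropy \<delta>2) * real (card (UNIV :: 'y set))) \<gamma> \<rho> P'"
proof -
  obtain idx :: "'y \<Rightarrow> nat" where idx: "bij_betw idx UNIV {..<CARD('y)}"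
    using ex_bij_betw_finite_nat[of "UNIV :: 'y set"] by (auto simp: atLeast0LessThan)
  define truth_table :: "bool list \<Rightarrow> 'x \<times> 'y \<Rightarrow> bool" where
    "truth_table r = (\<lambda>(x, y). r ! idx y)" for r
  define P' where "P' = map_protocol truth_table truth_table P"
  have "outcome P' (perturbed \<rho> CARD('y)) = outcome P (D_rho \<rho>)"
    unfolding P'_def outcome_map_protocol D_rho_eq_map_perturbed[OF idx] truth_table_def ..
  then have "solves_AD CARD('y) ((1 - bin_entropy \<delta>2) * CARD('y)) \<gamma> \<rho> P'"
    unfolding solves_AD_iff_outcome using solves_Agree_outcome[OF assms(6) assms(3,4)] by simp
  moreover have "comm P' = comm P"
    unfolding P'_def by (rule comm_map_protocol)
  ultimately show ?thesis
    by blast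
qed

end
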